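(* Let $d\ge1$, $f$ a monic hyperbolic polynomial of degree $d$, $0\le s\le d$, and $u$ a composition of $d$ with $\ell(u)\le s$. Then $H_s^u(f)$ contains at most one polynomial.
   Context: Hyperbolic: all roots real. $f=t^d+f_1t^{d-1}+\dots+f_d$; $H_s(f)$ is the set of monic hyperbolic degree-$d$ polynomials $h=t^d+h_1t^{d-1}+\dots+h_d$ with $h_i=f_i$ for $1\le i\le s$. Compositions of $d$: tuples of positive integers summing to $d$, length $\ell(u)$; $v\le u$ iff $v$ arises from $u$ by merging consecutive parts. $v(h)$ is the tuple of multiplicities of the distinct roots of $h$ in increasing order; $H_s^u(f)=\{h\in H_s(f):v(h)\le u\}$. *)

theory Defs
  imports "HOL-Computational_Algebra.Polynomial" Complex_Main
begin

definition monic_deg :: "nat \<Rightarrow> real poly \<Rightarrow> bool" where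
  "monic_deg d h \<longleftrightarrow> degree h = d \<and> lead_coeff h = 1"

definition hyperbolic :: "real poly \<Rightarrow> bool" where
  "hyperbolic h \<longleftrightarrow> (\<forall>z::complex. poly (map_poly of_real h) z = 0 \<longrightarrow> z \<in> \<real>)"

text \<open>The i-th coefficient h_i of h = t^d + h_1 t^(d-1) + ... + h_d.\<close>
definition hcoeff :: "nat \<Rightarrow> real poly \<Rightarrow> nat \<Rightarrow> real" where
  "hcoeff d h i = coeff h (d - i)"

definition H_s :: "nat \<Rightarrow> nat \<Rightarrow> real poly \<Rightarrow> real poly set" where
  "H_s d s f = {h. monic_deg d h \<and> hyperbolic h \<and> (\<forall>i. 1 \<le> i \<and> i \<le> s \<longrightarrow> hcoeff d h i = hcoeff d f i)}"

definition composition :: "nat \<Rightarrow> nat list \<Rightarrow> bool" where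
  "composition d u \<longleftrightarrow> (\<forall>x\<in>set u. 0 < x) \<and> sum_list u = d"

text \<open>v \<le> u iff v arises from u by merging consecutive parts.\<close>
definition comp_le :: "nat list \<Rightarrow> nat list \<Rightarrow> bool" where
  "comp_le v u \<longleftrightarrow> (\<exists>bs :: nat list list. concat bs = u \<and> (\<forall>b\<in>set bs. b \<noteq> []) \<and> v = map sum_list bs)"

definition mult_vec :: "real poly \<Rightarrow> nat list" where
  "mult_vec h = map (\<lambda>x. order x h) (sorted_list_of_set {x. poly h x = 0})"

definition H_su :: "nat \<Rightarrow> nat \<Rightarrow> nat list \<Rightarrow> real poly \<Rightarrow> real poly set" where
  "H_su d s u f = {h \<in> H_s d s f. comp_le (mult_vec h) u}"

end

theory Submission
  imports Defs "HOL-Computational_Algebra.Fundamental_Theorem_Algebra"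
begin

text \<open>Write a member h of H_s^u(f) as the product of the (t - y_j)^(u_j) with y_1 \<le> ... \<le> y_l,
  l = length u, by splitting the multiplicity of each distinct root along the merge v(h) \<le> u.
  For every Q of degree at most s, the weighted power sum \<Sum> u_j Q(y_j) is determined by
  the first s coefficients of h (Newton's identities), so it is the same for any two members
  with root lists y and y'. As both lists are sorted, some q of degree at most l - 1 is positive
  between y_j and y'_j when y_j < y'_j and negative when y'_j < y_j. Its antiderivative Q has
  degree at most l \<le> s and satisfies Q(y_j) < Q(y'_j) whenever y_j \<noteq> y'_j, so the two
  weighted sums agree only if y = y'.\<close>

text \<open>For monic h with roots r_1, ..., r_d in a splitting field, Q h'/h is a polynomial plus
  \<Sum> Q(r_i) / (t - r_i), so root_sum h Q = \<Sum> Q(r_i).\<close>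

definition root_sum :: "'a::field poly \<Rightarrow> 'a poly \<Rightarrow> 'a" where
  "root_sum h Q = coeff (Q * pderiv h mod h) (degree h - 1)"

lemma coeff_mult_monic_top:
  fixes p g :: "'a::comm_semiring_1 poly"
  assumes "degree p \<le> k" "lead_coeff g = 1"
  shows "coeff (p * g) (k + degree g) = coeff p k"
proof (cases "degree p = k")
  case True
  then show ?thesis using coeff_mult_degree_sum[of p g] assms by simp
next
  case False
  then have "degree (p * g) < k + degree g"
    using assms degree_mult_le[of p g] by linarith
  then show ?thesis using False assms by (simp add: coeff_eq_0)
qed

lemma mult_add_mod_poly:
  fixes y r A :: "'a::field poly"
  assumes "degree r < degree y"
  shows "(A * y + r) mod y = r"
  using assms by (simp add: mod_poly_less add.commute[of "A * y"])

lemma degree_mod_le_pred: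
  fixes x y :: "'a::field poly"
  assumes "y \<noteq> 0"
  shows "degree (x mod y) \<le> degree y - 1"
  using degree_mod_less[OF assms, of x] by auto

lemma monic_degree_0_eq_1:
  "lead_coeff (p :: 'a::comm_ring_1 poly) = 1 \<Longrightarrow> degree p = 0 \<Longrightarrow> p = 1"
  by (elim degree_eq_zeroE) simp

lemma root_sum_mult:
  fixes f g Q :: "'a::field poly"
  assumes f: "lead_coeff f = 1" and g: "lead_coeff g = 1"
  shows "root_sum (f * g) Q = root_sum f Q + root_sum g Q"
proof (cases "degree f = 0 \<or> degree g = 0")
  case True
  then have "f = 1 \<or> g = 1" using monic_degree_0_eq_1 f g by blast
  then show ?thesis by (auto simp: root_sum_def)
next
  case False
  define m n where "m = degree f" and "n = degree g"
  have f0: "f \<noteq> 0" and g0: "g \<noteq> 0" using f g by auto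
  define A C where "A = Q * pderiv f div f" and "C = Q * pderiv g div g"
  define B D where "B = Q * pderiv f mod f" and "D = Q * pderiv g mod g"
  have e1: "Q * pderiv f = A * f + B" and e2: "Q * pderiv g = C * g + D"
    unfolding A_def B_def C_def D_def by simp_all
  have dB: "degree B \<le> m - 1" and dD: "degree D \<le> n - 1"
    unfolding B_def D_def m_def n_def using degree_mod_le_pred f0 g0 by auto
  have dfg: "degree (f * g) = m + n" using f0 g0 by (simp add: m_def n_def degree_mult_eq)
  have "Q * pderiv (f * g) = g * (Q * pderiv f) + f * (Q * pderiv g)"
    by (simp add: pderiv_mult algebra_simps)
  also have "\<dots> = (A + C) * (f * g) + (B * g + D * f)"
    unfolding e1 e2 by (simp add: algebra_simps)
  finally have "Q * pderiv (f * g) mod (f * g) = B * g + D * f"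
  proof (rule ssubst, intro mult_add_mod_poly)
    have "degree (B * g) \<le> m - 1 + n" and "degree (D * f) \<le> n - 1 + m"
      using dB dD degree_mult_le[of B g] degree_mult_le[of D f] by (auto simp: m_def n_def)
    then have "degree (B * g + D * f) \<le> m + n - 1"
      using False unfolding m_def n_def by (intro degree_add_le) linarith+
    then show "degree (B * g + D * f) < degree (f * g)"
      using False dfg unfolding m_def n_def by linarith
  qed
  moreover have "coeff (B * g) (m + n - 1) = coeff B (m - 1)"
    using coeff_mult_monic_top[OF dB g] False by (simp add: m_def n_def)
  moreover have "coeff (D * f) (m + n - 1) = coeff D (n - 1)"
    using coeff_mult_monic_top[OF dD f] False by (simp add: m_def n_def add.commute)
  ultimately show ?thesis using dfg by (simp add: root_sum_def B_def D_def m_def n_def)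
qed

lemma root_sum_one [simp]: "root_sum 1 Q = 0"
  by (simp add: root_sum_def)

lemma root_sum_linear: "root_sum [:-r, 1:] Q = poly Q r"
proof -
  have "Q * pderiv [:-r, 1:] = synthetic_div Q r * [:-r, 1:] + [:poly Q r:]"
    using synthetic_div_correct'[of r Q] by (simp add: pderiv_pCons mult.commute)
  then have "Q * pderiv [:-r, 1:] mod [:-r, 1:] = [:poly Q r:]"
    by (simp only:) (rule mult_add_mod_poly, simp)
  then show ?thesis by (simp add: root_sum_def)
qed

lemma root_sum_power:
  assumes "lead_coeff p = 1"
  shows "root_sum (p ^ m) Q = of_nat m * root_sum p Q"
proof (induction m)
  case (Suc m)
  have "root_sum (p * p ^ m) Q = root_sum p Q + root_sum (p ^ m) Q"
    using assms by (intro root_sum_mult) (auto simp: lead_coeff_power)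
  then show ?case using Suc by (simp add: algebra_simps)
qed simp

lemma degree_wronskian_le:
  fixes f g :: "'a::field_char_0 poly"
  assumes "degree f = d" "degree g = d"
  shows "degree (pderiv f * g - f * pderiv g) \<le> degree (f - g) + (d - 1)"
proof -
  have "pderiv f * g - f * pderiv g = pderiv (f - g) * g - (f - g) * pderiv g"
    by (simp add: pderiv_diff algebra_simps)
  also have "degree \<dots> \<le> degree (f - g) + (d - 1)"
  proof (rule degree_diff_le)
    show "degree (pderiv (f - g) * g) \<le> degree (f - g) + (d - 1)"
    proof (cases "degree (f - g) = 0")
      case True
      then have "pderiv (f - g) = 0" by (simp only: pderiv_eq_0_iff)
      then show ?thesis by simp
    next
      case False
      then show ?thesis
        using degree_mult_le[of "pderiv (f - g)" g] degree_pderiv[of "f - g"] assms(2) by linarith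
    qed
    show "degree ((f - g) * pderiv g) \<le> degree (f - g) + (d - 1)"
      using degree_mult_le[of "f - g" "pderiv g"] degree_pderiv[of g] assms(2) by simp
  qed
  finally show ?thesis .
qed

lemma root_sum_diff_eq_coeff_wronskian:
  fixes f g Q :: "'a::field poly"
  assumes f: "lead_coeff f = 1" and g: "lead_coeff g = 1"
    and df: "degree f = d" and dg: "degree g = d" and "d \<ge> 1"
    and dX: "degree (Q * (pderiv f * g - f * pderiv g)) < 2 * d"
  shows "root_sum f Q - root_sum g Q = coeff (Q * (pderiv f * g - f * pderiv g)) (2 * d - 1)"
proof -
  have f0: "f \<noteq> 0" and g0: "g \<noteq> 0" using f g by auto
  define A1 A2 where "A1 = Q * pderiv f div f" and "A2 = Q * pderiv g div g"
  define B1 B2 where "B1 = Q * pderiv f mod f" and "B2 = Q * pderiv g mod g"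
  have e1: "Q * pderiv f = A1 * f + B1" and e2: "Q * pderiv g = A2 * g + B2"
    unfolding A1_def A2_def B1_def B2_def by simp_all
  have dB1: "degree B1 \<le> d - 1" and dB2: "degree B2 \<le> d - 1"
    unfolding B1_def B2_def using degree_mod_le_pred[OF f0] degree_mod_le_pred[OF g0] df dg
    by auto
  define X where "X = Q * (pderiv f * g - f * pderiv g)"
  have "X = g * (Q * pderiv f) - f * (Q * pderiv g)"
    unfolding X_def by (simp add: algebra_simps)
  also have "\<dots> = (A1 - A2) * (f * g) + (B1 * g - B2 * f)"
    unfolding e1 e2 by (simp add: algebra_simps)
  finally have X_divmod: "X = (A1 - A2) * (f * g) + (B1 * g - B2 * f)" .
  have dR: "degree (B1 * g - B2 * f) \<le> 2 * d - 1"
    using degree_mult_le[of B1 g] degree_mult_le[of B2 f] dB1 dB2 df dg \<open>d \<ge> 1\<close>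
    by (intro degree_diff_le) linarith+
  have "A1 - A2 = 0"
  proof (rule ccontr)
    assume "A1 - A2 \<noteq> 0"
    then have "degree ((A1 - A2) * (f * g)) \<ge> 2 * d" using f0 g0 df dg by (simp add: degree_mult_eq)
    then have "degree X \<ge> 2 * d" unfolding X_divmod using dR \<open>d \<ge> 1\<close>
      by (subst degree_add_eq_left) linarith+
    then show False using dX by (simp add: X_def)
  qed
  then have "X = B1 * g - B2 * f" using X_divmod by simp
  moreover have "2 * d - 1 = d - 1 + d" using \<open>d \<ge> 1\<close> by simp
  ultimately show ?thesis
    using coeff_mult_monic_top[OF dB1 g] coeff_mult_monic_top[OF dB2 f] df dg
    by (simp add: root_sum_def B1_def B2_def X_def)
qed

lemma root_sum_eq_if_top_coeffs_eq:
  fixes f g Q :: "'a::field_char_0 poly"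
  assumes "lead_coeff f = 1" "lead_coeff g = 1" "degree f = d" "degree g = d"
    and close: "degree Q + degree (f - g) < d"
  shows "root_sum f Q = root_sum g Q"
proof -
  have "degree (Q * (pderiv f * g - f * pderiv g)) \<le> degree Q + (degree (f - g) + (d - 1))"
    using degree_mult_le[of Q] degree_wronskian_le[OF assms(3,4)] by (meson add_left_mono order_trans)
  then have "degree (Q * (pderiv f * g - f * pderiv g)) < 2 * d - 1" using close by linarith
  moreover from this have "root_sum f Q - root_sum g Q = coeff (Q * (pderiv f * g - f * pderiv g)) (2 * d - 1)"
    using close by (intro root_sum_diff_eq_coeff_wronskian[OF assms(1-4)]) linarith+
  ultimately show ?thesis by (simp add: coeff_eq_0)
qed

definition poly_of_roots :: "'a::comm_ring_1 list \<Rightarrow> nat list \<Rightarrow> 'a poly" where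
  "poly_of_roots ys ms = (\<Prod>(y, m)\<leftarrow>zip ys ms. [:-y, 1:] ^ m)"

lemma poly_of_roots_Nil [simp]: "poly_of_roots [] ms = 1" "poly_of_roots ys [] = 1"
  by (simp_all add: poly_of_roots_def)

lemma poly_of_roots_Cons [simp]:
  "poly_of_roots (y # ys) (m # ms) = [:-y, 1:] ^ m * poly_of_roots ys ms"
  by (simp add: poly_of_roots_def)

lemma poly_of_roots_replicate_append:
  "poly_of_roots (replicate (length b) x @ ys) (b @ ms) = [:-x, 1:] ^ sum_list b * poly_of_roots ys ms"
  by (induction b) (simp_all add: power_add mult.assoc)

lemma lead_coeff_poly_of_roots [simp]: "lead_coeff (poly_of_roots (ys :: 'a::idom list) ms) = 1"
  by (induction ys ms rule: list_induct2') (simp_all add: lead_coeff_mult lead_coeff_power)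

lemma root_sum_poly_of_roots:
  "root_sum (poly_of_roots ys ms) Q = (\<Sum>(y, m)\<leftarrow>zip ys ms. of_nat m * poly Q y)"
  by (induction ys ms rule: list_induct2')
     (simp_all add: root_sum_mult root_sum_power root_sum_linear lead_coeff_power)

lemma poly_of_roots_refine:
  fixes xs :: "'a::{comm_ring_1, linorder} list"
  assumes "length xs = length bs" "sorted xs"
  shows "\<exists>ys. length ys = length (concat bs) \<and> sorted ys \<and> set ys \<subseteq> set xs \<and>
           poly_of_roots xs (map sum_list bs) = poly_of_roots ys (concat bs)"
  using assms
proof (induction xs bs rule: list_induct2)
  case (Cons x xs b bs)
  then obtain ys where "length ys = length (concat bs)" "sorted ys" "set ys \<subseteq> set xs"
      "poly_of_roots xs (map sum_list bs) = poly_of_roots ys (concat bs)"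
    by auto
  with Cons.prems show ?case
    by (intro exI[of _ "replicate (length b) x @ ys"])
       (auto simp: poly_of_roots_replicate_append sorted_append)
qed simp

lemma map_poly_of_real_mult:
  fixes p q :: "real poly"
  shows "(map_poly of_real (p * q) :: 'a::{real_algebra_1, comm_ring_1} poly)
    = map_poly of_real p * map_poly of_real q"
  by (intro poly_eqI) (simp add: coeff_mult coeff_map_poly of_real_sum)

lemma poly_map_poly_of_real: "poly (map_poly of_real p) (of_real x) = of_real (poly p x)"
  by (induction p) (auto simp: map_poly_pCons)

lemma hyperbolic_mult_right: "hyperbolic (p * q) \<Longrightarrow> hyperbolic q"
  by (auto simp: hyperbolic_def map_poly_of_real_mult)

lemma hyperbolic_no_real_roots_const:
  assumes "hyperbolic p" "\<And>x. poly p x \<noteq> 0"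
  shows "degree p = 0"
proof (rule ccontr)
  assume "degree p \<noteq> 0"
  then have "degree (map_poly complex_of_real p) \<noteq> 0" by (simp add: degree_map_poly)
  then obtain z where "poly (map_poly complex_of_real p) z = 0"
    by (metis degree_pCons_0 fundamental_theorem_of_algebra_alt)
  moreover from this obtain x where "z = of_real x"
    using assms(1) by (auto simp: hyperbolic_def elim: Reals_cases)
  ultimately have "poly p x = 0" by (simp add: poly_map_poly_of_real)
  with assms(2) show False by blast
qed

lemma hyperbolic_decompose:
  "hyperbolic p \<Longrightarrow> smult (lead_coeff p) (\<Prod>x | poly p x = 0. [:-x, 1:] ^ order x p) = p"
proof (induction p rule: poly_root_order_induct)
  case (no_roots p)
  then have "degree p = 0" using hyperbolic_no_real_roots_const by blast
  with no_roots show ?case by (auto elim: degree_eq_zeroE)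
next
  case (root p x n)
  define r where "r = [:-x, 1:] ^ n * p"
  have p0: "p \<noteq> 0" using root.hyps by auto
  have roots_r: "{z. poly r z = 0} = insert x {z. poly p z = 0}"
    using root.hyps by (auto simp: r_def)
  have "order x r = n"
    using root.hyps p0 by (simp add: r_def order_mult order_power_n_n order_0I)
  moreover have "order z r = order z p" if "poly p z = 0" for z
  proof -
    have "z \<noteq> x" using that root.hyps by auto
    then show ?thesis using root.hyps p0 by (simp add: r_def order_mult order_0I)
  qed
  ultimately have roots_prod: "(\<Prod>z | poly r z = 0. [:-z, 1:] ^ order z r)
      = [:-x, 1:] ^ n * (\<Prod>z | poly p z = 0. [:-z, 1:] ^ order z p)"
    unfolding roots_r using root.hyps p0 by (simp add: poly_roots_finite)
  have "lead_coeff r = lead_coeff p" by (simp add: r_def lead_coeff_mult lead_coeff_power)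
  then have "smult (lead_coeff r) (\<Prod>z | poly r z = 0. [:-z, 1:] ^ order z r)
      = [:-x, 1:] ^ n * smult (lead_coeff p) (\<Prod>z | poly p z = 0. [:-z, 1:] ^ order z p)"
    by (simp add: roots_prod)
  also have "\<dots> = r" using root.IH root.prems hyperbolic_mult_right by (simp add: r_def)
  finally show ?case by (simp only: r_def)
qed simp

lemma monic_hyperbolic_eq_poly_of_roots:
  assumes "lead_coeff h = 1" "hyperbolic h"
  shows "h = poly_of_roots (sorted_list_of_set {x. poly h x = 0}) (mult_vec h)"
proof -
  have "h \<noteq> 0" using assms(1) by auto
  then have "finite {x. poly h x = 0}" by (rule poly_roots_finite)
  then have "(\<Prod>x | poly h x = 0. [:-x, 1:] ^ order x h)
      = (\<Prod>x\<leftarrow>sorted_list_of_set {x. poly h x = 0}. [:-x, 1:] ^ order x h)"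
    using prod.distinct_set_conv_list[of "sorted_list_of_set {x. poly h x = 0}"
        "\<lambda>x. [:-x, 1:] ^ order x h"] by simp
  also have "\<dots> = poly_of_roots (sorted_list_of_set {x. poly h x = 0}) (mult_vec h)"
    by (simp add: poly_of_roots_def mult_vec_def zip_map2 zip_same_conv_map comp_def)
  finally show ?thesis using hyperbolic_decompose[OF assms(2)] assms(1) by simp
qed

lemma poly_of_roots_if_comp_le:
  assumes "lead_coeff h = 1" "hyperbolic h" "comp_le (mult_vec h) u"
  shows "\<exists>ys. length ys = length u \<and> sorted ys \<and> h = poly_of_roots ys u"
proof -
  obtain bs where bs: "concat bs = u" "mult_vec h = map sum_list bs"
    using assms(3) unfolding comp_le_def by auto
  define xs where "xs = sorted_list_of_set {x. poly h x = 0}"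
  have "length xs = length bs" using bs(2) by (metis length_map mult_vec_def xs_def)
  then show ?thesis
    using poly_of_roots_refine[of xs bs] monic_hyperbolic_eq_poly_of_roots[OF assms(1,2)] bs
    by (auto simp: xs_def)
qed

definition sign_separates :: "real poly \<Rightarrow> real list \<Rightarrow> real list \<Rightarrow> bool" where
  "sign_separates q xs ys \<longleftrightarrow> (\<forall>(a, b)\<in>set (zip xs ys). \<forall>x.
     (a < x \<and> x < b \<longrightarrow> 0 < poly q x) \<and> (b < x \<and> x < a \<longrightarrow> poly q x < 0))"

lemma sign_separates_Cons:
  "sign_separates q (a # xs) (b # ys) \<longleftrightarrow>
     (\<forall>x. (a < x \<and> x < b \<longrightarrow> 0 < poly q x) \<and> (b < x \<and> x < a \<longrightarrow> poly q x < 0)) \<and>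
     sign_separates q xs ys"
  by (simp add: sign_separates_def)

lemma sign_separatesD:
  assumes "sign_separates q xs ys" "(a, b) \<in> set (zip xs ys)"
  shows "a < x \<Longrightarrow> x < b \<Longrightarrow> 0 < poly q x" "b < x \<Longrightarrow> x < a \<Longrightarrow> poly q x < 0"
  using assms by (auto simp: sign_separates_def)

lemma sign_separates_mult_linear:
  assumes "sign_separates q xs ys"
    and "\<And>a b. (a, b) \<in> set (zip xs ys) \<Longrightarrow> a \<noteq> b \<Longrightarrow> z \<le> min a b"
  shows "sign_separates ([:-z, 1:] * q) xs ys"
  unfolding sign_separates_def
proof (intro ballI allI, clarify)
  fix a b x assume ab: "(a, b) \<in> set (zip xs ys)"
  note sign_separatesD[OF assms(1) ab]
  moreover have "z < x" if "min a b < x" "a \<noteq> b" using assms(2)[OF ab] that by linarith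
  ultimately show "(a < x \<and> x < b \<longrightarrow> 0 < poly ([:-z, 1:] * q) x) \<and>
      (b < x \<and> x < a \<longrightarrow> poly ([:-z, 1:] * q) x < 0)"
    by (auto simp: mult_pos_neg)
qed

lemma le_of_disjoint_interval:
  fixes l r M :: real
  assumes "l < r" "\<And>x. x < M \<Longrightarrow> P x" "\<And>x. l < x \<Longrightarrow> x < r \<Longrightarrow> \<not> P x"
  shows "M \<le> l"
proof (rule ccontr)
  assume "\<not> M \<le> l"
  then have "l < (l + min r M) / 2" "(l + min r M) / 2 < r" "(l + min r M) / 2 < M"
    using assms(1) by auto
  then show False using assms(2,3) by blast
qed

lemma sign_separates_threshold_le:
  assumes "sign_separates q xs ys" "\<And>x. x < M \<Longrightarrow> 0 < e * poly q x"
    and "(a, b) \<in> set (zip xs ys)" "(a < b \<and> e = -1) \<or> (b < a \<and> e = 1)"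
  shows "M \<le> min a b"
  using assms(4)
proof
  assume "a < b \<and> e = -1"
  then have "M \<le> a"
    using assms(2) sign_separatesD[OF assms(1,3)]
    by (intro le_of_disjoint_interval[of a b _ "\<lambda>x. 0 < e * poly q x"]) force+
  with \<open>a < b \<and> e = -1\<close> show ?thesis by simp
next
  assume "b < a \<and> e = 1"
  then have "M \<le> b"
    using assms(2) sign_separatesD[OF assms(1,3)]
    by (intro le_of_disjoint_interval[of b a _ "\<lambda>x. 0 < e * poly q x"]) force+
  with \<open>b < a \<and> e = 1\<close> show ?thesis by simp
qed

lemma sign_separates_Cons_flip:
  assumes sep: "sign_separates q xs ys" and e: "e = 1 \<or> e = -1"
    and below: "\<And>x. x < M \<Longrightarrow> 0 < e * poly q x" and "max a b \<le> M"
    and later: "\<And>aj bj. (aj, bj) \<in> set (zip xs ys) \<Longrightarrow> a \<le> aj \<and> b \<le> bj"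
    and flip: "(a < b \<and> e = -1) \<or> (b < a \<and> e = 1)"
  shows "sign_separates ([:-max a b, 1:] * q) (a # xs) (b # ys) \<and>
    (\<forall>x < max a b. 0 < - e * poly ([:-max a b, 1:] * q) x)"
proof -
  define z where "z = max a b"
  have "z \<le> min aj bj" if ab: "(aj, bj) \<in> set (zip xs ys)" "aj \<noteq> bj" for aj bj
  proof (cases "(aj < bj \<and> e = -1) \<or> (bj < aj \<and> e = 1)")
    case True
    then have "M \<le> min aj bj"
      using below by (intro sign_separates_threshold_le[OF sep _ ab(1)]) auto
    with \<open>max a b \<le> M\<close> show ?thesis unfolding z_def by (rule order_trans)
  next
    case False
    with e flip ab(2) have "(a < b \<and> bj < aj) \<or> (b < a \<and> aj < bj)" by auto
    then show ?thesis using later[OF ab(1)] by (auto simp: z_def)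
  qed
  then have "sign_separates ([:-z, 1:] * q) xs ys"
    by (intro sign_separates_mult_linear[OF sep]) auto
  moreover have "0 < - e * poly ([:-z, 1:] * q) x" if "x < z" for x
  proof -
    have "- e * poly ([:-z, 1:] * q) x = (z - x) * (e * poly q x)"
      by (simp add: algebra_simps)
    moreover have "0 < e * poly q x"
      using \<open>max a b \<le> M\<close> that by (intro below) (auto simp: z_def less_max_iff_disj)
    ultimately show ?thesis using that by simp
  qed
  moreover from this have "sign_separates ([:-z, 1:] * q) [a] [b]"
    using flip by (auto simp: sign_separates_def z_def zero_less_mult_iff mult_less_0_iff)
  ultimately show ?thesis by (simp add: sign_separates_Cons z_def)
qed

text \<open>Since both lists are sorted, intervals of opposite sign do not overlap, so scanning
  from the left a new linear factor is needed only when the required sign switches;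
  e is the sign of q to the left of all intervals.\<close>

lemma sign_separating_poly_exists:
  assumes "length xs = length ys" "xs \<noteq> []" "sorted xs" "sorted ys"
  shows "\<exists>q e. degree q \<le> length xs - 1 \<and> sign_separates q xs ys \<and> (e = 1 \<or> e = -1) \<and>
           (\<forall>x < max (hd xs) (hd ys). 0 < e * poly q x)"
  using assms
proof (induction xs ys rule: list_induct2)
  case (Cons a xs b ys)
  show ?case
  proof (cases "xs = []")
    case True
    define e :: real where "e = (if b < a then -1 else 1)"
    have "sign_separates [:e:] [a] [b]" by (auto simp: sign_separates_def e_def)
    then show ?thesis
      using True Cons.hyps by (intro exI[of _ "[:e:]"] exI[of _ e]) (auto simp: e_def)
  next
    case False
    then obtain q e where deg_q: "degree q \<le> length xs - 1" and sep: "sign_separates q xs ys"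
      and e: "e = 1 \<or> e = -1" and below: "\<forall>x < max (hd xs) (hd ys). 0 < e * poly q x"
      using Cons by auto
    have later: "a \<le> aj \<and> b \<le> bj" if "(aj, bj) \<in> set (zip xs ys)" for aj bj
      using Cons.prems that by (auto dest: set_zip_leftD set_zip_rightD)
    have "ys \<noteq> []" using False Cons.hyps by auto
    then have ab_le: "max a b \<le> max (hd xs) (hd ys)"
      using later[of "hd xs" "hd ys"] False by (cases xs; cases ys) auto
    show ?thesis
    proof (cases "(a < b \<and> e = -1) \<or> (b < a \<and> e = 1)")
      case True
      have "degree ([:-max a b, 1:] * q) \<le> length xs"
        using degree_mult_le[of "[:-max a b, 1:]" q] deg_q False by (cases xs) auto
      then show ?thesis
        using sign_separates_Cons_flip[OF sep e _ ab_le later True] below e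
        by (intro exI[of _ "[:-max a b, 1:] * q"] exI[of _ "- e"]) auto
    next
      case False
      with e ab_le below have "sign_separates q [a] [b]"
        by (fastforce simp: sign_separates_def)
      with e ab_le below deg_q sep show ?thesis
        by (intro exI[of _ q] exI[of _ e]) (auto simp: sign_separates_Cons)
    qed
  qed
qed simp

lemma pderiv_antiderivative_exists:
  fixes q :: "'a::field_char_0 poly"
  shows "\<exists>Q. pderiv Q = q \<and> degree Q \<le> degree q + 1"
proof -
  define Q where "Q = (\<Sum>i\<le>degree q. monom (coeff q i / of_nat (Suc i)) (Suc i))"
  have pderiv_sum: "pderiv (sum f A) = (\<Sum>x\<in>A. pderiv (f x))" for f :: "nat \<Rightarrow> 'a poly" and A
    using higher_pderiv_sum[of 1 f A] by simp
  have "pderiv Q = (\<Sum>i\<le>degree q. monom (coeff q i) i)"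
    unfolding Q_def pderiv_sum pderiv_monom by (intro sum.cong) (simp_all del: of_nat_Suc)
  also have "\<dots> = q" by (rule poly_as_sum_of_monoms)
  finally have "pderiv Q = q" .
  moreover have "degree Q \<le> degree q + 1" unfolding Q_def
    by (intro degree_sum_le) (auto intro: order.trans[OF degree_monom_le])
  ultimately show ?thesis by blast
qed

lemma poly_less_if_pderiv_pos:
  fixes Q :: "real poly"
  assumes "a < b" "\<And>x. a < x \<Longrightarrow> x < b \<Longrightarrow> 0 < poly (pderiv Q) x"
  shows "poly Q a < poly Q b"
  by (rule DERIV_pos_imp_increasing_open[OF assms(1)])
     (use assms(2) in \<open>auto intro: poly_DERIV continuous_intros\<close>)

lemma poly_less_if_pderiv_neg:
  fixes Q :: "real poly"
  assumes "a < b" "\<And>x. a < x \<Longrightarrow> x < b \<Longrightarrow> poly (pderiv Q) x < 0"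
  shows "poly Q b < poly Q a"
  by (rule DERIV_neg_imp_decreasing_open[OF assms(1)])
     (use assms(2) in \<open>auto intro: poly_DERIV continuous_intros\<close>)

lemma poly_increasing_on_pairs_exists:
  fixes xs ys :: "real list"
  assumes "length xs = length ys" "sorted xs" "sorted ys"
  shows "\<exists>Q. degree Q \<le> length xs \<and>
    (\<forall>(a, b)\<in>set (zip xs ys). a \<noteq> b \<longrightarrow> poly Q a < poly Q b)"
proof (cases "xs = []")
  case False
  then obtain q e where deg_q: "degree q \<le> length xs - 1" and sep: "sign_separates q xs ys"
    using sign_separating_poly_exists assms by blast
  obtain Q where Q: "pderiv Q = q" "degree Q \<le> degree q + 1"
    using pderiv_antiderivative_exists by blast
  have "poly Q a < poly Q b" if ab: "(a, b) \<in> set (zip xs ys)" "a \<noteq> b" for a b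
  proof (cases "a < b")
    case True
    then show ?thesis using sign_separatesD(1)[OF sep ab(1)]
      by (intro poly_less_if_pderiv_pos) (simp_all add: Q(1))
  next
    case False
    then have "b < a" using ab(2) by simp
    then show ?thesis using sign_separatesD(2)[OF sep ab(1)]
      by (intro poly_less_if_pderiv_neg) (simp_all add: Q(1))
  qed
  moreover have "degree Q \<le> length xs" using Q(2) deg_q False by (cases xs) auto
  ultimately show ?thesis by blast
qed (intro exI[of _ 0], simp)

lemma weighted_sum_le_and_eq_imp_eq:
  fixes F :: "'a \<Rightarrow> real"
  assumes "length xs = length ys" "length ys = length ms" "\<forall>m\<in>set ms. 0 < m"
    and "\<forall>(a, b)\<in>set (zip xs ys). a \<noteq> b \<longrightarrow> F a < F b"
  shows "(\<Sum>(y, m)\<leftarrow>zip xs ms. of_nat m * F y) \<le> (\<Sum>(y, m)\<leftarrow>zip ys ms. of_nat m * F y) \<and>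
    ((\<Sum>(y, m)\<leftarrow>zip xs ms. of_nat m * F y) = (\<Sum>(y, m)\<leftarrow>zip ys ms. of_nat m * F y) \<longrightarrow> xs = ys)"
  using assms
proof (induction xs ys ms rule: list_induct3)
  case (Cons a xs b ys m ms)
  define S where "S zs = (\<Sum>(y, m)\<leftarrow>zip zs ms. of_nat m * F y)" for zs
  have IH: "S xs \<le> S ys" "S xs = S ys \<Longrightarrow> xs = ys" using Cons by (simp_all add: S_def)
  have "0 < m" and "a \<noteq> b \<Longrightarrow> F a < F b" using Cons.prems by auto
  then have lt: "a \<noteq> b \<Longrightarrow> of_nat m * F a < of_nat m * F b" by simp
  then have le: "of_nat m * F a \<le> of_nat m * F b" by (cases "a = b") auto
  have "of_nat m * F a + S xs \<le> of_nat m * F b + S ys \<and>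
      (of_nat m * F a + S xs = of_nat m * F b + S ys \<longrightarrow> a = b \<and> xs = ys)"
    using IH le lt by fastforce
  then show ?case by (simp add: S_def)
qed simp

lemma H_s_coeff_eq:
  assumes "h1 \<in> H_s d s f" "h2 \<in> H_s d s f" "d - s \<le> i"
  shows "coeff h1 i = coeff h2 i"
proof -
  have deg: "degree h1 = d" "degree h2 = d" and lead: "lead_coeff h1 = 1" "lead_coeff h2 = 1"
    and top: "\<And>k. 1 \<le> k \<Longrightarrow> k \<le> s \<Longrightarrow> coeff h1 (d - k) = coeff h2 (d - k)"
    using assms(1,2) by (auto simp: H_s_def monic_deg_def hcoeff_def)
  consider "d < i" | "i = d" | "i < d" by linarith
  then show ?thesis
  proof cases
    case 3
    then show ?thesis using top[of "d - i"] assms(3) by simp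
  qed (use deg lead in \<open>simp_all add: coeff_eq_0\<close>)
qed

lemma root_sum_eq_on_H_s:
  assumes "h1 \<in> H_s d s f" "h2 \<in> H_s d s f" "degree Q \<le> s"
  shows "root_sum h1 Q = root_sum h2 Q"
proof (cases "h1 = h2")
  case False
  have "degree (h1 - h2) < d - s"
  proof (rule ccontr)
    assume "\<not> degree (h1 - h2) < d - s"
    then have "coeff h1 (degree (h1 - h2)) = coeff h2 (degree (h1 - h2))"
      by (intro H_s_coeff_eq[OF assms(1,2)]) simp
    then have "lead_coeff (h1 - h2) = 0" by (simp only: coeff_diff)
    then have "h1 - h2 = 0" by (simp only: leading_coeff_0_iff)
    with False show False by simp
  qed
  then show ?thesis
    using assms by (intro root_sum_eq_if_top_coeffs_eq) (auto simp: H_s_def monic_deg_def)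
qed simp

theorem mainTheorem5:
  fixes d s :: nat and f :: "real poly" and u :: "nat list"
  assumes "d \<ge> 1"
    and "monic_deg d f" and "hyperbolic f"
    and "s \<le> d"
    and "composition d u" and "length u \<le> s"
  shows "\<forall>h1 \<in> H_su d s u f. \<forall>h2 \<in> H_su d s u f. h1 = h2"
proof (intro ballI)
  fix h1 h2 assume h: "h1 \<in> H_su d s u f" "h2 \<in> H_su d s u f"
  then obtain ys1 ys2 where ys: "length ys1 = length u" "sorted ys1" "h1 = poly_of_roots ys1 u"
      "length ys2 = length u" "sorted ys2" "h2 = poly_of_roots ys2 u"
    using poly_of_roots_if_comp_le by (simp add: H_su_def H_s_def monic_deg_def) metis
  obtain Q where deg_Q: "degree Q \<le> length u"
    and incr: "\<forall>(a, b)\<in>set (zip ys1 ys2). a \<noteq> b \<longrightarrow> poly Q a < poly Q b"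
    using poly_increasing_on_pairs_exists[of ys1 ys2] ys by auto
  have "root_sum h1 Q = root_sum h2 Q"
    using h deg_Q assms(6) by (intro root_sum_eq_on_H_s[of h1 d s f h2]) (auto simp: H_su_def)
  then have "ys1 = ys2"
    using weighted_sum_le_and_eq_imp_eq[OF _ _ _ incr, of u] ys assms(5)
    by (simp add: root_sum_poly_of_roots composition_def)
  then show "h1 = h2" using ys by simp
qed

end
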